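(* Consider a convolutional arithmetic circuit (as described in the context) with fixed architecture, and let $\mathcal{A}^y$ be the coefficient tensor of its output node $y$, viewed as a function of the network's linear weights $\{\mathbf{a}^{l,\gamma}\}_{l,\gamma}$ and $\mathbf{a}^{L,y}$ (all ranging over the corresponding real Euclidean spaces). Then for any partition $(I,J)$ of $[N]$, the function mapping the weights to $\operatorname{rank}[\![\mathcal{A}^y]\!]_{I,J}$ attains its maximum almost everywhere with respect to Lebesgue measure on the weight space.
   Context: Convolutional arithmetic circuit: the input is $X=(\mathbf{x}_1,\ldots,\mathbf{x}_N)\in(\mathbb{R}^s)^N$. The representation layer computes $\mathrm{rep}(i,d)=f_d(\mathbf{x}_i)$ for $i\in[N]$, $d\in[M]$, with fixed functions $f_d:\mathbb{R}^s\to\mathbb{R}$. There are hidden layers $l=0,\ldots,L-1$. Hidden layer $l$ has $r_l$ channels; it first applies a $1\times1$ convolution $\mathrm{conv}(l,j,\gamma)=\sum_{\alpha}a^{l,\gamma}_\alpha\,\mathrm{prev}(j,\alpha)$ at each spatial location $j$ of the previous layer (weights $\mathbf{a}^{0,\gamma}\in\mathbb{R}^M$, $\mathbf{a}^{l,\gamma}\in\mathbb{R}^{r_{l-1}}$ for $l\ge1$, $\gamma\in[r_l]$, shared across locations), and then product pooling: locations are partitioned into non-overlapping windows (the same for all channels) and window $w$ yields $\mathrm{pool}(l,w,\gamma)=\prod_{j\in w}\mathrm{conv}(l,j,\gamma)$. The last hidden layer's pooling is global, producing a vector in $\mathbb{R}^{r_{L-1}}$, and output node $y$ computes $\sum_\alpha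 a^{L,y}_\alpha\,\mathrm{pool}(L-1,\cdot,\alpha)$ with $\mathbf{a}^{L,y}\in\mathbb{R}^{r_{L-1}}$. The coefficient tensor $\mathcal{A}^y$ is the order-$N$ tensor with dimension $M$ in each mode whose entry $\mathcal{A}^y_{d_1\ldots d_N}$ is the value of output $y$ when the representation layer is replaced by $\mathrm{rep}(i,d)=1$ if $d=d_i$ and $0$ otherwise (so its entries are polynomials in the weights, and $h_y(X)=\sum_{d_1..d_N}\mathcal{A}^y_{d_1\ldots d_N}\prod_i f_{d_i}(\mathbf{x}_i)$). Matricization: for a tensor $\mathcal{A}$ of order $N$ with dimension $M$ in each mode and a partition $(I,J)$ of $[N]$ with $I=\{i_1<\cdots<i_{|I|}\}$, $J=\{j_1<\cdots<j_{|J|}\}$, $[\![\mathcal{A}]\!]_{I,J}$ is the $M^{|I|}\times M^{|J|}$ matrix holding $\mathcal{A}_{d_1\ldots d_N}$ in row $1+\sum_{t}(d_{i_t}-1)M^{|I|-t}$ and column $1+\sum_t(d_{j_t}-1)M^{|J|-t}$. *)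

theory Defs
  imports "HOL-Analysis.Analysis" "Jordan_Normal_Form.DL_Rank"
begin

text \<open>
Conventions (all indices 0-based):
  input locations i < N, representation functions d < M;
  hidden layers l < L with r l channels;
  nloc l = number of spatial locations entering hidden layer l (nloc 0 = N),
  pw l j = index of the pooling window of layer l containing location j,
  windows of layer l are the locations of layer l+1 (nloc L = 1: global pooling).
  Weights: w (l, g, a) = a^{l,g}_a for l < L, and w (L, 0, a) = a^{L,y}_a.
\<close>

definition cac_din :: "nat \<Rightarrow> (nat \<Rightarrow> nat) \<Rightarrow> nat \<Rightarrow> nat" where
  "cac_din M r l = (if l = 0 then M else r (l - 1))"

fun cac_pool :: "nat \<Rightarrow> (nat \<Rightarrow> nat) \<Rightarrow> (nat \<Rightarrow> nat) \<Rightarrow> (nat \<Rightarrow> nat \<Rightarrow> nat)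
    \<Rightarrow> (nat \<times> nat \<times> nat \<Rightarrow> real) \<Rightarrow> (nat \<Rightarrow> nat \<Rightarrow> real) \<Rightarrow> nat \<Rightarrow> nat \<Rightarrow> nat \<Rightarrow> real" where
  "cac_pool M r nloc pw w rep 0 wi g =
     (\<Prod>j\<in>{j. j < nloc 0 \<and> pw 0 j = wi}. \<Sum>a<M. w (0, g, a) * rep j a)"
| "cac_pool M r nloc pw w rep (Suc l) wi g =
     (\<Prod>j\<in>{j. j < nloc (Suc l) \<and> pw (Suc l) j = wi}.
        \<Sum>a<r l. w (Suc l, g, a) * cac_pool M r nloc pw w rep l j a)"

definition cac_output :: "nat \<Rightarrow> nat \<Rightarrow> (nat \<Rightarrow> nat) \<Rightarrow> (nat \<Rightarrow> nat) \<Rightarrow> (nat \<Rightarrow> nat \<Rightarrow> nat)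
    \<Rightarrow> (nat \<times> nat \<times> nat \<Rightarrow> real) \<Rightarrow> (nat \<Rightarrow> nat \<Rightarrow> real) \<Rightarrow> real" where
  "cac_output M L r nloc pw w rep =
     (\<Sum>a<r (L - 1). w (L, 0, a) * cac_pool M r nloc pw w rep (L - 1) 0 a)"

definition coeff_tensor :: "nat \<Rightarrow> nat \<Rightarrow> (nat \<Rightarrow> nat) \<Rightarrow> (nat \<Rightarrow> nat) \<Rightarrow> (nat \<Rightarrow> nat \<Rightarrow> nat)
    \<Rightarrow> (nat \<times> nat \<times> nat \<Rightarrow> real) \<Rightarrow> (nat \<Rightarrow> nat) \<Rightarrow> real" where
  "coeff_tensor M L r nloc pw w d =
     cac_output M L r nloc pw w (\<lambda>i e. if e = d i then 1 else 0)"

definition cac_weight_idx :: "nat \<Rightarrow> nat \<Rightarrow> (nat \<Rightarrow> nat) \<Rightarrow> (nat \<times> nat \<times> nat) set" where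
  "cac_weight_idx M L r =
     {(l, g, a). l < L \<and> g < r l \<and> a < cac_din M r l} \<union> {(l, g, a). l = L \<and> g = 0 \<and> a < r (L - 1)}"

text \<open>Digit of mixed-radix index k (most significant first): the t-th (0-based) element
  of the sorted set S gets digit (k div M^(|S|-1-t)) mod M.\<close>
definition mat_index_digit :: "nat \<Rightarrow> nat set \<Rightarrow> nat \<Rightarrow> nat \<Rightarrow> nat" where
  "mat_index_digit M S k i =
     (let t = (THE t. t < card S \<and> sorted_list_of_set S ! t = i)
      in (k div M ^ (card S - 1 - t)) mod M)"

definition matricize :: "nat \<Rightarrow> nat set \<Rightarrow> nat set \<Rightarrow> ((nat \<Rightarrow> nat) \<Rightarrow> real) \<Rightarrow> real mat" where
  "matricize M I J A =
     mat (M ^ card I) (M ^ card J)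
       (\<lambda>(rw, cl). A (\<lambda>i. if i \<in> I then mat_index_digit M I rw i else mat_index_digit M J cl i))"

definition real_mat_rank :: "real mat \<Rightarrow> nat" where
  "real_mat_rank A = vec_space.rank (dim_row A) A"

end

theory Submission
  imports Defs "Jordan_Normal_Form.Matrix_Kernel"
begin

text \<open>
Every entry of the coefficient tensor is a polynomial in the weights, so for a column selection
that is independent at some weight vector, the Gram determinant of those columns is a polynomial
in the weights that does not vanish identically.  Choosing such a selection at a weight vector of
maximal rank, the rank is maximal wherever this polynomial is nonzero, and the zero set of a
nonzero polynomial is a Lebesgue null set (by Fubini, since on every coordinate line it is either
everything or finite).
\<close>

inductive polyfun :: "(('i \<Rightarrow> real) \<Rightarrow> real) \<Rightarrow> bool" where
  polyfun_const: "polyfun (\<lambda>x. c)"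
| polyfun_coord: "polyfun (\<lambda>x. x i)"
| polyfun_add: "polyfun f \<Longrightarrow> polyfun g \<Longrightarrow> polyfun (\<lambda>x. f x + g x)"
| polyfun_mult: "polyfun f \<Longrightarrow> polyfun g \<Longrightarrow> polyfun (\<lambda>x. f x * g x)"

lemma polyfun_sum: "(\<And>a. a \<in> A \<Longrightarrow> polyfun (f a)) \<Longrightarrow> polyfun (\<lambda>x. \<Sum>a\<in>A. f a x)"
  by (induction A rule: infinite_finite_induct) (auto intro: polyfun.intros)

lemma polyfun_prod: "(\<And>a. a \<in> A \<Longrightarrow> polyfun (f a)) \<Longrightarrow> polyfun (\<lambda>x. \<Prod>a\<in>A. f a x)"
  by (induction A rule: infinite_finite_induct) (auto intro: polyfun.intros)

lemma polyfun_fun_upd: "polyfun p \<Longrightarrow> polyfun (\<lambda>x. p (x(i := t)))"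
proof (induction rule: polyfun.induct)
  case (polyfun_coord j)
  show ?case by (cases "j = i") (auto intro: polyfun.intros)
qed (auto intro: polyfun.intros)

lemma polyfun_on_line: "polyfun p \<Longrightarrow> \<exists>q. \<forall>t. p (x(i := t)) = poly q t"
proof (induction rule: polyfun.induct)
  case (polyfun_const c)
  show ?case by (rule exI[of _ "[:c:]"]) simp
next
  case (polyfun_coord j)
  show ?case by (rule exI[of _ "if j = i then [:0, 1:] else [:x j:]"]) simp
next
  case (polyfun_add f g)
  then obtain q1 q2 where "\<forall>t. f (x(i := t)) = poly q1 t" "\<forall>t. g (x(i := t)) = poly q2 t" by blast
  then show ?case by (intro exI[of _ "q1 + q2"]) (metis poly_add)
next
  case (polyfun_mult f g)
  then obtain q1 q2 where "\<forall>t. f (x(i := t)) = poly q1 t" "\<forall>t. g (x(i := t)) = poly q2 t" by blast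
  then show ?case by (intro exI[of _ "q1 * q2"]) (metis poly_mult)
qed

lemma polyfun_zeros_on_line_finite:
  assumes "polyfun p" and "p (x(i := t0)) \<noteq> 0"
  shows "finite {t. p (x(i := t)) = 0}"
proof -
  obtain q where q: "\<And>t. p (x(i := t)) = poly q t" using polyfun_on_line[OF assms(1)] by blast
  with assms(2) have "q \<noteq> 0" by auto
  then show ?thesis unfolding q by (rule poly_roots_finite)
qed

lemma polyfun_measurable: "polyfun p \<Longrightarrow> p \<in> borel_measurable (PiM S (\<lambda>_. lborel))"
proof (induction rule: polyfun.induct)
  case (polyfun_coord i)
  show ?case
  proof (cases "i \<in> S")
    case True
    then show ?thesis by (auto intro: measurable_component_singleton)
  next
    case False
    have "(\<lambda>x. undefined :: real) \<in> borel_measurable (PiM S (\<lambda>_. lborel))" by simp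
    then show ?thesis
      by (rule measurable_cong[THEN iffD1, rotated])
        (use False in \<open>auto simp: space_PiM PiE_def extensional_def\<close>)
  qed
qed auto

lemma polyfun_zero_set_null:
  fixes p :: "('i \<Rightarrow> real) \<Rightarrow> real"
  assumes "finite S" and "polyfun p"
    and "x0 \<in> space (PiM S (\<lambda>_. lborel))" and "p x0 \<noteq> 0"
  shows "{x \<in> space (PiM S (\<lambda>_. lborel)). p x = 0} \<in> null_sets (PiM S (\<lambda>_. lborel))"
  using assms
proof (induction S arbitrary: p x0 rule: finite_induct)
  case empty
  then have no_zeros: "{x \<in> space (PiM {} (\<lambda>_. lborel)). p x = 0} = {}"
    by (auto simp: space_PiM)
  show ?case unfolding no_zeros by simp
next
  case (insert i S)
  interpret product_sigma_finite "\<lambda>_. lborel :: real measure" by standard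
  let ?P = "PiM (insert i S) (\<lambda>_. lborel)" and ?Q = "PiM S (\<lambda>_. lborel)"
  let ?Z = "{x \<in> space ?P. p x = 0}"
  have Z_sets: "?Z \<in> sets ?P"
    using polyfun_measurable[OF insert.prems(1)] by measurable
  define q where "q y = p (y(i := x0 i))" for y
  have "(restrict x0 S)(i := x0 i) = x0"
    using insert.prems(2) insert.hyps(2) by (auto simp: space_PiM PiE_def extensional_def)
  then have "q (restrict x0 S) \<noteq> 0"
    using insert.prems(3) by (simp only: q_def not_False_eq_True)
  then have "{y \<in> space ?Q. q y = 0} \<in> null_sets ?Q"
    using insert.prems(1) by (intro insert.IH) (auto simp: q_def polyfun_fun_upd space_PiM)
  then have slices_null: "AE y in ?Q. (\<integral>\<^sup>+ t. indicator ?Z (y(i := t)) \<partial>lborel) = 0"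
  proof (rule AE_mp[OF AE_not_in AE_I2], intro impI)
    fix y assume y: "y \<in> space ?Q" "y \<notin> {y \<in> space ?Q. q y = 0}"
    then have "finite {t. p (y(i := t)) = 0}"
      using polyfun_zeros_on_line_finite[OF insert.prems(1), of y i "x0 i"] unfolding q_def by blast
    then have null: "{t. p (y(i := t)) = 0} \<in> null_sets lborel"
      by (rule finite_imp_null_set_lborel)
    have "(\<integral>\<^sup>+ t. indicator ?Z (y(i := t)) \<partial>lborel) = (\<integral>\<^sup>+ t. indicator {t. p (y(i := t)) = 0} t \<partial>lborel)"
      using y(1) by (intro nn_integral_cong) (auto simp: indicator_def space_PiM PiE_def extensional_def)
    also have "\<dots> = 0"
      using null by (metis nn_integral_indicator null_setsD1 null_setsD2)
    finally show "(\<integral>\<^sup>+ t. indicator ?Z (y(i := t)) \<partial>lborel) = 0" .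
  qed
  have "emeasure ?P ?Z = (\<integral>\<^sup>+ y. (\<integral>\<^sup>+ t. indicator ?Z (y(i := t)) \<partial>lborel) \<partial>?Q)"
    using Z_sets by (simp add: product_nn_integral_insert[OF insert.hyps(1,2)] flip: nn_integral_indicator)
  also have "\<dots> = 0"
    using nn_integral_cong_AE[OF slices_null] by simp
  finally show ?case using Z_sets by (simp add: null_sets_def)
qed

lemma polyfun_det:
  assumes "\<And>x. F x \<in> carrier_mat n n"
    and "\<And>i j. i < n \<Longrightarrow> j < n \<Longrightarrow> polyfun (\<lambda>x. F x $$ (i, j))"
  shows "polyfun (\<lambda>x. det (F x))"
proof -
  have "polyfun (\<lambda>x. \<Sum>p \<in> {p. p permutes {0..<n}}. signof p * (\<Prod>i = 0..<n. F x $$ (i, p i)))"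
  proof (intro polyfun_sum polyfun_mult polyfun_const polyfun_prod)
    fix p i assume "p \<in> {p. p permutes {0..<n}}" "i \<in> {0..<n}"
    then show "polyfun (\<lambda>x. F x $$ (i, p i))"
      using assms(2) by (auto dest: permutes_in_image)
  qed
  then show ?thesis using det_def'[OF assms(1)] by presburger
qed

definition col_select :: "'a mat \<Rightarrow> nat list \<Rightarrow> 'a mat" where
  "col_select A js = mat (dim_row A) (length js) (\<lambda>(i, k). A $$ (i, js ! k))"

lemma col_select_carrier: "col_select A js \<in> carrier_mat (dim_row A) (length js)"
  by (simp add: col_select_def)

lemma cols_col_select:
  assumes "set js \<subseteq> {..<dim_col A}"
  shows "cols (col_select A js) = map (col A) js"
  using assms by (intro nth_equalityI eq_vecI) (auto simp: col_select_def col_def)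

lemma mat_kernel_gram:
  fixes B :: "real mat"
  assumes B: "B \<in> carrier_mat n R"
  shows "mat_kernel (transpose_mat B * B) = mat_kernel B"
proof
  show "mat_kernel B \<subseteq> mat_kernel (transpose_mat B * B)"
    using B by (intro mat_kernel_mult_subset) auto
next
  show "mat_kernel (transpose_mat B * B) \<subseteq> mat_kernel B"
  proof
    fix v assume "v \<in> mat_kernel (transpose_mat B * B)"
    then have v: "v \<in> carrier_vec R" "transpose_mat B *\<^sub>v (B *\<^sub>v v) = 0\<^sub>v R"
      using B by (auto simp: mat_kernel_def assoc_mult_mat_vec[of _ R n _ R])
    have Bv: "B *\<^sub>v v \<in> carrier_vec n" using B v(1) by simp
    have "(B *\<^sub>v v) \<bullet> (B *\<^sub>v v) = (transpose_mat B *\<^sub>v (B *\<^sub>v v)) \<bullet> v"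
      using transpose_vec_mult_scalar[OF B v(1) Bv] by simp
    also have "\<dots> = 0" using v by simp
    finally have "B *\<^sub>v v = 0\<^sub>v n"
      using conjugate_square_eq_0_vec[OF Bv] by simp
    then show "v \<in> mat_kernel B" by (rule mat_kernelI[OF B v(1)])
  qed
qed

lemma det_gram_nonzero_iff:
  fixes B :: "real mat"
  assumes B: "B \<in> carrier_mat n R"
  shows "det (transpose_mat B * B) \<noteq> 0 \<longleftrightarrow> mat_kernel B = {0\<^sub>v R}"
proof -
  have G: "transpose_mat B * B \<in> carrier_mat R R" using B by simp
  have "det (transpose_mat B * B) \<noteq> 0 \<longleftrightarrow> mat_kernel B \<subseteq> {0\<^sub>v R}"
    unfolding det_0_iff_vec_prod_zero[OF G] mat_kernel_gram[OF B, symmetric] mat_kernel[OF G]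
    by auto
  moreover have "0\<^sub>v R \<in> mat_kernel B"
    using B by (intro mat_kernelI[OF B]) (auto intro!: eq_vecI)
  ultimately show ?thesis by blast
qed

lemma (in vec_space) mat_kernel_trivial_iff_cols_indpt:
  assumes B: "B \<in> carrier_mat n R"
  shows "mat_kernel B = {0\<^sub>v R} \<longleftrightarrow> distinct (cols B) \<and> lin_indpt (set (cols B))"
proof -
  have ker: "mat_kernel B = {0\<^sub>v R} \<longleftrightarrow> (\<forall>v \<in> carrier_vec R. B *\<^sub>v v = 0\<^sub>v n \<longrightarrow> v = 0\<^sub>v R)"
    using B by (auto simp: mat_kernel[OF B])
  show ?thesis
  proof
    assume "mat_kernel B = {0\<^sub>v R}"
    with ker have kernel_zero: "\<And>v. v \<in> carrier_vec R \<Longrightarrow> B *\<^sub>v v = 0\<^sub>v n \<Longrightarrow> v = 0\<^sub>v R" by blast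
    have dist: "distinct (cols B)"
    proof (rule ccontr)
      assume "\<not> distinct (cols B)"
      then obtain k l where kl: "k < R" "l < R" "k \<noteq> l" "col B k = col B l"
        using B by (auto simp: distinct_conv_nth)
      have "B *\<^sub>v (unit_vec R k - unit_vec R l) = col B k - col B l"
        using B kl(1,2) by (intro eq_vecI) (auto simp: col_def scalar_prod_def unit_vec_def
            sum.distrib[symmetric] algebra_simps if_distrib cong: if_cong)
      also have "\<dots> = 0\<^sub>v n"
        using kl(2,4) B by (simp add: minus_cancel_vec[of _ n])
      finally have "unit_vec R k - unit_vec R l = (0\<^sub>v R :: 'a vec)"
        by (rule kernel_zero[rotated]) simp
      moreover have "(unit_vec R k - unit_vec R l :: 'a vec) $ k = 1"
        using kl by simp
      ultimately show False
        using kl(1) by simp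
    qed
    moreover have "lin_indpt (set (cols B))"
      using lin_depE[OF B _ dist] kernel_zero by metis
    ultimately show "distinct (cols B) \<and> lin_indpt (set (cols B))" ..
  next
    assume "distinct (cols B) \<and> lin_indpt (set (cols B))"
    then show "mat_kernel B = {0\<^sub>v R}" using ker lin_depI[OF B] by blast
  qed
qed

lemma (in vec_space) rank_ge_col_select:
  assumes A: "A \<in> carrier_mat n nc" and js: "set js \<subseteq> {..<nc}"
    and ker: "mat_kernel (col_select A js) = {0\<^sub>v (length js)}"
  shows "length js \<le> rank A"
proof -
  have B: "col_select A js \<in> carrier_mat n (length js)"
    using col_select_carrier[of A js] A by simp
  have cols: "cols (col_select A js) = map (col A) js"
    using A js by (intro cols_col_select) auto
  have indpt: "distinct (map (col A) js)" "lin_indpt (set (map (col A) js))"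
    using ker mat_kernel_trivial_iff_cols_indpt[OF B] cols by auto
  have "set (map (col A) js) \<subseteq> set (cols A)"
    using A js by (auto simp: cols_def)
  from rank_ge_card_indpt[OF A this indpt(2)] show ?thesis
    using distinct_card[OF indpt(1)] by simp
qed

lemma (in vec_space) exists_col_select_rank:
  assumes A: "A \<in> carrier_mat n nc"
  obtains js where "set js \<subseteq> {..<nc}" and "length js = rank A"
    and "mat_kernel (col_select A js) = {0\<^sub>v (length js)}"
proof -
  obtain S where max: "maximal S (\<lambda>T. T \<subseteq> set (cols A) \<and> lin_indpt T)"
    using maximal_exists[of "\<lambda>T. T \<subseteq> set (cols A) \<and> lin_indpt T" "card (set (cols A))" "{}"]
    by (meson List.finite_set card_mono empty_iff empty_subsetI finite_lin_indpt2 rev_finite_subset)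
  have S: "S \<subseteq> set (cols A)" "lin_indpt S" using max by (auto simp: maximal_def)
  obtain ss where ss: "set ss = S" "distinct ss"
    using finite_distinct_list finite_subset[OF S(1)] by blast
  have "ss \<in> lists (col A ` {..<nc})" using S(1) ss(1) A by (auto simp: cols_def)
  then obtain js where js: "set js \<subseteq> {..<nc}" "ss = map (col A) js" by (auto simp: lists_image)
  have B: "col_select A js \<in> carrier_mat n (length js)"
    using col_select_carrier[of A js] A by simp
  have "cols (col_select A js) = ss"
    using A js by (simp add: cols_col_select)
  then have "mat_kernel (col_select A js) = {0\<^sub>v (length js)}"
    using mat_kernel_trivial_iff_cols_indpt[OF B] ss S(2) by simp
  moreover have "length js = rank A"
    using rank_card_indpt[OF A max] distinct_card[OF ss(2)] ss(1) js(2) by simp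
  ultimately show thesis using that js(1) by blast
qed

lemma polyfun_rank_lower_bound:
  fixes A :: "('i \<Rightarrow> real) \<Rightarrow> real mat"
  assumes carrier: "\<And>x. A x \<in> carrier_mat n nc"
    and entries: "\<And>i j. i < n \<Longrightarrow> j < nc \<Longrightarrow> polyfun (\<lambda>x. A x $$ (i, j))"
  obtains F where "polyfun F" and "F x0 \<noteq> 0"
    and "\<And>x. F x \<noteq> 0 \<Longrightarrow> vec_space.rank n (A x0) \<le> vec_space.rank n (A x)"
proof -
  interpret vec_space "TYPE(real)" n .
  obtain js where js: "set js \<subseteq> {..<nc}" "length js = rank (A x0)"
    and ker: "mat_kernel (col_select (A x0) js) = {0\<^sub>v (length js)}"
    using exists_col_select_rank[OF carrier] .
  define B where "B x = col_select (A x) js" for x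
  have B: "B x \<in> carrier_mat n (length js)" for x
    using col_select_carrier[of "A x" js] carrier[of x] by (simp add: B_def)
  define F where "F x = det (transpose_mat (B x) * B x)" for x
  have "polyfun F"
    unfolding F_def
  proof (rule polyfun_det)
    fix k l assume kl: "k < length js" "l < length js"
    then have "(transpose_mat (B x) * B x) $$ (k, l) = (\<Sum>i<n. A x $$ (i, js ! k) * A x $$ (i, js ! l))" for x
      using B[of x] carrier[of x]
      by (simp add: B_def col_select_def scalar_prod_def atLeast0LessThan)
    moreover have "js ! k < nc" "js ! l < nc"
      using js(1) kl by (auto dest: nth_mem)
    ultimately show "polyfun (\<lambda>x. (transpose_mat (B x) * B x) $$ (k, l))"
      by (simp, intro polyfun_sum polyfun_mult entries) auto
  qed (use B in \<open>auto intro: mult_carrier_mat[of _ _ n]\<close>)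
  moreover have "F x0 \<noteq> 0"
    using det_gram_nonzero_iff[OF B] ker by (simp add: F_def B_def)
  moreover have "rank (A x0) \<le> rank (A x)" if "F x \<noteq> 0" for x
    using rank_ge_col_select[OF carrier js(1)] det_gram_nonzero_iff[OF B] that js(2)
    by (simp add: F_def B_def)
  ultimately show thesis using that by blast
qed

lemma AE_rank_maximal:
  fixes A :: "('i \<Rightarrow> real) \<Rightarrow> real mat"
  assumes "finite S"
    and carrier: "\<And>x. A x \<in> carrier_mat n nc"
    and entries: "\<And>i j. i < n \<Longrightarrow> j < nc \<Longrightarrow> polyfun (\<lambda>x. A x $$ (i, j))"
  shows "AE x in PiM S (\<lambda>_. lborel).
           \<forall>x' \<in> space (PiM S (\<lambda>_. lborel)). vec_space.rank n (A x') \<le> vec_space.rank n (A x)"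
proof -
  let ?P = "PiM S (\<lambda>_. lborel :: real measure)"
  let ?rk = "\<lambda>x. vec_space.rank n (A x)"
  obtain x where "x \<in> space ?P"
    by (metis ex_in_conv space_PiM_empty_iff UNIV_not_empty space_borel space_lborel)
  moreover have "\<forall>x. x \<in> space ?P \<longrightarrow> ?rk x < Suc nc"
    using vec_space.rank_le_nc[OF carrier] by (simp add: less_Suc_eq_le)
  ultimately obtain x0 where x0: "x0 \<in> space ?P" "\<And>x. x \<in> space ?P \<Longrightarrow> ?rk x \<le> ?rk x0"
    using Lattices_Big.ex_has_greatest_nat[of "\<lambda>x. x \<in> space ?P" x ?rk] by blast
  obtain F where F: "polyfun F" "F x0 \<noteq> 0" "\<And>x. F x \<noteq> 0 \<Longrightarrow> ?rk x0 \<le> ?rk x"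
    using polyfun_rank_lower_bound[OF carrier entries] by blast
  show ?thesis
  proof (rule AE_I'[OF polyfun_zero_set_null[OF assms(1) F(1) x0(1) F(2)]])
    show "{x \<in> space ?P. \<not> (\<forall>x' \<in> space ?P. ?rk x' \<le> ?rk x)} \<subseteq> {x \<in> space ?P. F x = 0}"
      using x0(2) F(3) order_trans by blast
  qed
qed

lemma polyfun_cac_pool: "polyfun (\<lambda>w. cac_pool M r nloc pw w rep l wi g)"
proof (induction l arbitrary: wi g)
  case 0
  show ?case by (simp, intro polyfun_prod polyfun_sum polyfun_mult polyfun_const polyfun_coord)
next
  case (Suc l)
  show ?case by (simp, intro polyfun_prod polyfun_sum polyfun_mult polyfun_coord Suc)
qed

lemma polyfun_coeff_tensor: "polyfun (\<lambda>w. coeff_tensor M L r nloc pw w d)"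
  unfolding coeff_tensor_def cac_output_def
  by (intro polyfun_sum polyfun_mult polyfun_coord polyfun_cac_pool)

lemma finite_cac_weight_idx: "finite (cac_weight_idx M L r)"
proof -
  have "cac_weight_idx M L r = (SIGMA l:{..<L}. SIGMA g:{..<r l}. {..<cac_din M r l}) \<union> {L} \<times> {0} \<times> {..<r (L - 1)}"
    unfolding cac_weight_idx_def by auto
  then show ?thesis by simp
qed

theorem claim2:
  fixes N M L :: nat and r nloc :: "nat \<Rightarrow> nat" and pw :: "nat \<Rightarrow> nat \<Rightarrow> nat"
    and I J :: "nat set"
  assumes "L \<ge> 1"
    and "nloc 0 = N" and "nloc L = 1"
    and "\<forall>l<L. pw l ` {..<nloc l} = {..<nloc (Suc l)}"
    and "I \<union> J = {..<N}" and "I \<inter> J = {}"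
  shows "AE w in PiM (cac_weight_idx M L r) (\<lambda>_. lborel).
           \<forall>w' \<in> space (PiM (cac_weight_idx M L r) (\<lambda>_. lborel)).
             real_mat_rank (matricize M I J (coeff_tensor M L r nloc pw w'))
             \<le> real_mat_rank (matricize M I J (coeff_tensor M L r nloc pw w))"
proof -
  define A where "A w = matricize M I J (coeff_tensor M L r nloc pw w)" for w
  have carrier: "A w \<in> carrier_mat (M ^ card I) (M ^ card J)" for w
    by (simp add: A_def matricize_def)
  have "polyfun (\<lambda>w. A w $$ (i, j))" if "i < M ^ card I" "j < M ^ card J" for i j
    using that by (simp add: A_def matricize_def polyfun_coeff_tensor)
  moreover have "real_mat_rank (A w) = vec_space.rank (M ^ card I) (A w)" for w
    using carrier[of w] by (simp add: real_mat_rank_def)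
  ultimately show ?thesis
    using AE_rank_maximal[OF finite_cac_weight_idx carrier] by (simp add: A_def)
qed

end
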